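(* Let $p\geq2$ be an integer. If $v\in V$ then $v^{2p}\in W$.
   Context: $\Omega:=\mathbb{R}/2\pi\mathbb{Z}\times(0,\pi)$; $X:=\{u\in H^1(\Omega)\cap L^\infty(\Omega): u(t,0)=u(t,\pi)=0,\ u(-t,x)=u(t,x)\}$. $V:=\{\sum_{j\geq1}\xi_j\cos(jt)\sin(jx):\sum j^2\xi_j^2<\infty\}$, equivalently the set of $v(t,x)=\eta(t+x)-\eta(t-x)$ with $\eta\in H^1(\mathbb{R}/2\pi\mathbb{Z})$ odd. $W:=\{w\in X:\int_\Omega wv\,dt\,dx=0\ \forall v\in V\}$. *)

theory Defs
  imports "HOL-Analysis.Analysis"
begin

text \<open>Functions on Omega = (R/2piZ) x (0,pi) are represented as functions
  real x real => real; t-periodicity is imposed where needed.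
  Integration over Omega = integration over [0,2pi] x (0,pi).\<close>

definition Om :: "(real \<times> real) set" where
  "Om = {0..2*pi} \<times> {0<..<pi}"

definition dt :: "(real \<times> real \<Rightarrow> real) \<Rightarrow> real \<times> real \<Rightarrow> real" where
  "dt \<phi> = (\<lambda>z. deriv (\<lambda>s. \<phi> (s, snd z)) (fst z))"

definition dx :: "(real \<times> real \<Rightarrow> real) \<Rightarrow> real \<times> real \<Rightarrow> real" where
  "dx \<phi> = (\<lambda>z. deriv (\<lambda>y. \<phi> (fst z, y)) (snd z))"

coinductive smooth2 :: "(real \<times> real \<Rightarrow> real) \<Rightarrow> bool" where
  "\<lbrakk>\<forall>z. \<phi> differentiable (at z); smooth2 (dt \<phi>); smooth2 (dx \<phi>)\<rbrakk> \<Longrightarrow> smooth2 \<phi>"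

definition t_periodic :: "(real \<times> real \<Rightarrow> real) \<Rightarrow> bool" where
  "t_periodic u \<longleftrightarrow> (\<forall>t x. u (t + 2*pi, x) = u (t, x))"

definition test_per :: "(real \<times> real \<Rightarrow> real) set" where
  "test_per = {\<phi>. smooth2 \<phi> \<and> t_periodic \<phi>}"

definition test_c :: "(real \<times> real \<Rightarrow> real) set" where
  "test_c = {\<phi>. \<phi> \<in> test_per \<and>
     (\<exists>a b. 0 < a \<and> b < pi \<and> (\<forall>t x. x \<notin> {a..b} \<longrightarrow> \<phi> (t, x) = 0))}"

definition L2_Om :: "(real \<times> real \<Rightarrow> real) \<Rightarrow> bool" where
  "L2_Om f \<longleftrightarrow> set_borel_measurable lborel Om f \<and> set_integrable lborel Om (\<lambda>z. (f z)^2)"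

definition Linf_Om :: "(real \<times> real \<Rightarrow> real) \<Rightarrow> bool" where
  "Linf_Om f \<longleftrightarrow> set_borel_measurable lborel Om f \<and>
     (\<exists>C. AE z in lborel. z \<in> Om \<longrightarrow> \<bar>f z\<bar> \<le> C)"

definition H1_Om :: "(real \<times> real \<Rightarrow> real) \<Rightarrow> bool" where
  "H1_Om u \<longleftrightarrow> t_periodic u \<and> L2_Om u \<and>
     (\<exists>g1 g2. L2_Om g1 \<and> L2_Om g2 \<and>
        (\<forall>\<phi>\<in>test_c. (LINT z:Om|lborel. u z * dt \<phi> z) = - (LINT z:Om|lborel. g1 z * \<phi> z)) \<and>
        (\<forall>\<phi>\<in>test_c. (LINT z:Om|lborel. u z * dx \<phi> z) = - (LINT z:Om|lborel. g2 z * \<phi> z)))"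

text \<open>Zero trace on x = 0 and x = pi: the integration by parts formula in x holds
  without boundary terms for all smooth t-periodic functions (not vanishing at x = 0, pi).\<close>
definition zero_trace :: "(real \<times> real \<Rightarrow> real) \<Rightarrow> bool" where
  "zero_trace u \<longleftrightarrow> (\<exists>g2. L2_Om g2 \<and>
     (\<forall>\<phi>\<in>test_per. (LINT z:Om|lborel. u z * dx \<phi> z) = - (LINT z:Om|lborel. g2 z * \<phi> z)))"

definition Xsp :: "(real \<times> real \<Rightarrow> real) set" where
  "Xsp = {u. H1_Om u \<and> Linf_Om u \<and> zero_trace u \<and> (\<forall>t x. u (-t, x) = u (t, x))}"

definition Vsp :: "(real \<times> real \<Rightarrow> real) set" where
  "Vsp = {(\<lambda>(t, x). \<Sum>j. \<xi> j * cos (real j * t) * sin (real j * x)) | \<xi>.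
            summable (\<lambda>j. (real j)^2 * (\<xi> j)^2)}"

definition Wsp :: "(real \<times> real \<Rightarrow> real) set" where
  "Wsp = {w. w \<in> Xsp \<and> (\<forall>v\<in>Vsp. (LINT z:Om|lborel. w z * v z) = 0)}"

end

theory Submission
  imports Defs
begin

text \<open>Write \<open>v = \<Sum>\<^sub>j \<xi>\<^sub>j cos (j t) sin (j x)\<close> with \<open>\<Sum>\<^sub>j j\<^sup>2 \<xi>\<^sub>j\<^sup>2 < \<infinity>\<close>. Then
  \<open>\<Sum>\<^sub>j \<bar>\<xi>\<^sub>j\<bar> < \<infinity>\<close>, so the series converges uniformly and \<open>v\<close> is continuous, bounded, even
  and \<open>2\<pi>\<close>-periodic in \<open>t\<close>. The weak derivatives of \<open>v\<^sup>n\<close> are obtained from the partial sums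
  \<open>v\<^sub>N\<close>: integrating \<open>v\<^sub>N\<^sup>n\<close> by parts produces no boundary terms (periodicity in \<open>t\<close>,
  \<open>v\<^sub>N = 0\<close> at \<open>x = 0, \<pi>\<close>), and by orthogonality of the modes the derivatives of \<open>v\<^sub>N\<close> are
  Cauchy in \<open>L\<^sup>2(\<Omega>)\<close>, so a subsequence converges almost everywhere under an integrable
  majorant and dominated convergence passes to the limit. Since the test functions in the
  \<open>x\<close>-integration by parts need not vanish at \<open>x = 0, \<pi>\<close>, this also gives the zero trace.
  Finally \<open>v (t + \<pi>, \<pi> - x) = - v (t, x)\<close>, so \<open>v\<^sup>2\<^sup>p w\<close> is odd under this reflection for
  every \<open>w \<in> V\<close> and has integral zero over \<open>\<Omega>\<close>.\<close>

section \<open>Integration over \<open>\<Omega>\<close>\<close>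

lemma Om_subset_cbox: "Om \<subseteq> cbox (0,0) (2*pi,pi)"
  unfolding Om_def by (auto simp: cbox_Pair_eq)

lemma Om_sets [measurable]: "Om \<in> sets lborel"
proof -
  have "Om = ({0..2*pi} \<times> UNIV) \<inter> (UNIV \<times> {0<..<pi})"
    unfolding Om_def by auto
  moreover have "closed ({0..2*pi} \<times> (UNIV::real set))"
    by (intro closed_Times) auto
  moreover have "open ((UNIV::real set) \<times> {0<..<pi})"
    by (intro open_Times) auto
  ultimately show ?thesis
    by (metis borel_closed borel_open sets.Int sets_lborel)
qed

lemma emeasure_Om_finite: "emeasure lborel Om < \<infinity>"
  using emeasure_mono[OF Om_subset_cbox, of lborel] emeasure_lborel_cbox_finite[of "(0,0)" "(2*pi,pi)"]
  by (simp add: order_le_less_trans)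

lemma set_integrable_Om_continuous:
  fixes f :: "real \<times> real \<Rightarrow> real"
  assumes "continuous_on UNIV f"
  shows "set_integrable lborel Om f"
proof -
  have "set_integrable lborel (cbox (0,0) (2*pi,pi)) f"
    unfolding set_integrable_def
    by (rule borel_integrable_compact) (auto intro: continuous_on_subset[OF assms])
  then show ?thesis
    using Om_sets Om_subset_cbox by (rule set_integrable_subset)
qed

lemma set_integral_Om_continuous:
  fixes f :: "real \<times> real \<Rightarrow> real"
  assumes "continuous_on UNIV f"
  shows "(LINT z:Om|lborel. f z) = integral (cbox (0,0) (2*pi,pi)) f"
proof -
  have "cbox (0,0) (2*pi,pi) - Om \<subseteq> {z. z \<bullet> (0,1) = 0} \<union> {z. z \<bullet> (0,1) = pi}"
    unfolding Om_def by (auto simp: cbox_Pair_eq)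
  moreover have "negligible ({z. z \<bullet> (0,1) = 0} \<union> {z::real\<times>real. z \<bullet> (0,1) = pi})"
    by (intro negligible_Un negligible_standard_hyperplane) (auto simp: Basis_prod_def)
  ultimately have negl: "negligible (cbox (0,0) (2*pi,pi) - Om)"
    using negligible_subset by blast
  have "(LINT z:Om|lborel. f z) = integral Om f"
    by (rule set_borel_integral_eq_integral(2)[OF set_integrable_Om_continuous[OF assms]])
  also have "\<dots> = integral (cbox (0,0) (2*pi,pi)) f"
    by (rule integral_spike_set) (use negl Om_subset_cbox in \<open>auto intro: negligible_subset\<close>)
  finally show ?thesis .
qed

lemma set_integral_Om_iterated_tx:
  fixes f :: "real \<times> real \<Rightarrow> real"
  assumes "continuous_on UNIV f"
  shows "(LINT z:Om|lborel. f z) = integral {0..2*pi} (\<lambda>t. integral {0..pi} (\<lambda>x. f (t,x)))"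
  using set_integral_Om_continuous[OF assms] integral_prod_continuous[of 0 0 "2*pi" pi f] assms
  by (auto intro: continuous_on_subset)

lemma set_integral_Om_iterated_xt:
  fixes f :: "real \<times> real \<Rightarrow> real"
  assumes "continuous_on UNIV f"
  shows "(LINT z:Om|lborel. f z) = integral {0..pi} (\<lambda>x. integral {0..2*pi} (\<lambda>t. f (t,x)))"
proof -
  have "continuous_on (cbox (0,0) (2*pi,pi)) (\<lambda>(t,x). f (t,x))"
    using assms by (auto intro: continuous_on_subset)
  from integral_swap_continuous[where f="\<lambda>t x. f (t,x)", OF this]
  show ?thesis using set_integral_Om_iterated_tx[OF assms] by simp
qed

lemma continuous_on_integral_parameter:
  fixes h :: "real \<times> real \<Rightarrow> real"
  assumes "continuous_on UNIV h"
  shows "continuous_on UNIV (\<lambda>x. integral {a..b} (\<lambda>t. h (t,x)))"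
proof -
  have "continuous_on UNIV (\<lambda>z::real\<times>real. h (snd z, fst z))"
    by (intro continuous_on_compose2[OF assms]) (auto intro!: continuous_intros)
  then have "continuous_on (UNIV \<times> cbox a b) (\<lambda>(x, t). h (t, x))"
    by (simp add: case_prod_beta') (meson continuous_on_subset subset_UNIV)
  from integral_continuous_on_param[OF this] show ?thesis by simp
qed

lemma continuous_bounded_on_Om:
  fixes h :: "real \<times> real \<Rightarrow> real"
  assumes "continuous_on UNIV h"
  obtains C where "C \<ge> 0" "\<And>z. z \<in> Om \<Longrightarrow> \<bar>h z\<bar> \<le> C"
proof -
  have "compact (h ` cbox (0,0) (2*pi,pi))"
    by (rule compact_continuous_image) (auto intro: continuous_on_subset[OF assms])
  then obtain C where C: "C > 0" "\<And>y. y \<in> h ` cbox (0,0) (2*pi,pi) \<Longrightarrow> norm y \<le> C"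
    using compact_imp_bounded bounded_pos by metis
  show ?thesis
    by (rule that[of C]) (use C Om_subset_cbox in auto)
qed

lemma L2_Om_continuous:
  fixes f :: "real \<times> real \<Rightarrow> real"
  assumes "continuous_on UNIV f"
  shows "L2_Om f"
proof -
  have [measurable]: "f \<in> borel_measurable lborel"
    using assms by (simp add: borel_measurable_continuous_onI)
  have "set_borel_measurable lborel Om f"
    unfolding set_borel_measurable_def by measurable
  moreover have "set_integrable lborel Om (\<lambda>z. (f z)\<^sup>2)"
    using assms by (intro set_integrable_Om_continuous continuous_intros)
  ultimately show ?thesis
    unfolding L2_Om_def ..
qed

lemma Linf_Om_continuous:
  fixes f :: "real \<times> real \<Rightarrow> real"
  assumes "continuous_on UNIV f"
  shows "Linf_Om f"
proof -
  have [measurable]: "f \<in> borel_measurable lborel"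
    using assms by (simp add: borel_measurable_continuous_onI)
  have meas: "set_borel_measurable lborel Om f"
    unfolding set_borel_measurable_def by measurable
  obtain C where "\<And>z. z \<in> Om \<Longrightarrow> \<bar>f z\<bar> \<le> C"
    using continuous_bounded_on_Om[OF assms] by blast
  then have "AE z in lborel. z \<in> Om \<longrightarrow> \<bar>f z\<bar> \<le> C"
    by (intro AE_I2) auto
  with meas show ?thesis
    unfolding Linf_Om_def by blast
qed

lemma L2_Om_bounded_mult:
  fixes h G :: "real \<times> real \<Rightarrow> real"
  assumes G: "L2_Om G" and [measurable]: "h \<in> borel_measurable lborel"
    and h_bound: "\<And>z. \<bar>h z\<bar> \<le> B"
  shows "L2_Om (\<lambda>z. h z * G z)"
proof -
  have [measurable]: "(\<lambda>z. indicator Om z * G z) \<in> borel_measurable lborel"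
    using G unfolding L2_Om_def set_borel_measurable_def by simp
  have "(\<lambda>z. indicator Om z * (h z * G z)) = (\<lambda>z. h z * (indicator Om z * G z))"
    "(\<lambda>z. indicator Om z * (h z * G z)\<^sup>2) = (\<lambda>z. (h z)\<^sup>2 * (indicator Om z * G z)\<^sup>2)"
    by (auto simp: indicator_def power_mult_distrib)
  then have meas: "set_borel_measurable lborel Om (\<lambda>z. h z * G z)"
    "set_borel_measurable lborel Om (\<lambda>z. (h z * G z)\<^sup>2)"
    unfolding set_borel_measurable_def by simp_all
  have "(h z)\<^sup>2 \<le> B\<^sup>2" for z
    using power_mono[OF h_bound[of z] abs_ge_zero, of 2] by simp
  then have "AE z in lborel. z \<in> Om \<longrightarrow> norm ((h z * G z)\<^sup>2) \<le> norm (B\<^sup>2 * (G z)\<^sup>2)"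
    by (auto simp: power_mult_distrib mult_right_mono)
  moreover have "set_integrable lborel Om (\<lambda>z. B\<^sup>2 * (G z)\<^sup>2)"
    using G unfolding L2_Om_def by simp
  ultimately show ?thesis
    unfolding L2_Om_def using meas set_integrable_bound by blast
qed

lemma integral_reflect_0_pi:
  fixes g :: "real \<Rightarrow> real"
  shows "integral {0..pi} (\<lambda>x. g (pi - x)) = integral {0..pi} g"
proof -
  have "integral {0..pi} (\<lambda>x. g (pi - x)) = integral {0..pi} (\<lambda>x. (g \<circ> (+) pi) (- x))"
    by (simp add: o_def)
  also have "\<dots> = integral {-pi..0} (g \<circ> (+) pi)"
    using Henstock_Kurzweil_Integration.integral_reflect_real[of 0 "-pi" "g \<circ> (+) pi"] by simp
  also have "\<dots> = integral {0..pi} g"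
    using integral_shift_Icc_real[of "-pi" 0 g pi] by simp
  finally show ?thesis .
qed

text \<open>No periodicity in \<open>t\<close> is needed: the reflection \<open>(t, x) \<mapsto> (t + \<pi>, \<pi> - x)\<close> maps
  \<open>[0, \<pi>] \<times> [0, \<pi>]\<close> onto \<open>[\<pi>, 2\<pi>] \<times> [0, \<pi>]\<close>.\<close>

lemma set_integral_Om_odd_reflection:
  fixes f :: "real \<times> real \<Rightarrow> real"
  assumes cont: "continuous_on UNIV f"
    and odd: "\<And>t x. f (t + pi, pi - x) = - f (t, x)"
  shows "(LINT z:Om|lborel. f z) = 0"
proof -
  define G where "G x = integral {0..pi} (\<lambda>t. f (t,x))" for x
  have f_slice: "(\<lambda>t. f (t,x)) integrable_on {a..b}" for x a b
    by (intro integrable_continuous_real continuous_on_compose2[OF cont]) (auto intro!: continuous_intros)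
  have inner: "integral {0..2*pi} (\<lambda>t. f (t,x)) = G x - G (pi - x)" for x
  proof -
    have "integral {0..2*pi} (\<lambda>t. f (t,x))
        = integral {0..pi} (\<lambda>t. f (t,x)) + integral {pi..2*pi} (\<lambda>t. f (t,x))"
      by (rule Henstock_Kurzweil_Integration.integral_combine[symmetric]) (auto intro: f_slice)
    also have "integral {pi..2*pi} (\<lambda>t. f (t,x)) = integral {0..pi} (\<lambda>t. f (t + pi, pi - (pi - x)))"
      using integral_shift_Icc_real[of 0 pi "\<lambda>t. f (t,x)" pi] by (simp add: o_def add.commute)
    finally show ?thesis unfolding G_def odd by simp
  qed
  have G_cont: "continuous_on UNIV G"
    unfolding G_def by (rule continuous_on_integral_parameter[OF cont])
  have "(LINT z:Om|lborel. f z) = integral {0..pi} (\<lambda>x. G x - G (pi - x))"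
    using set_integral_Om_iterated_xt[OF cont] inner by simp
  also have "\<dots> = integral {0..pi} G - integral {0..pi} (\<lambda>x. G (pi - x))"
    by (rule integral_diff)
       (auto intro!: integrable_continuous_real continuous_on_compose2[OF G_cont] continuous_intros)
  also have "\<dots> = 0" using integral_reflect_0_pi[of G] by simp
  finally show ?thesis .
qed

section \<open>Square-integrable Cauchy sequences\<close>

lemma set_integral_dominated_convergence:
  fixes s :: "nat \<Rightarrow> 'a \<Rightarrow> real"
  assumes [measurable]: "A \<in> sets M" "\<And>k. s k \<in> borel_measurable M" "f \<in> borel_measurable M"
    and w: "set_integrable M A w"
    and lim: "AE z in M. z \<in> A \<longrightarrow> (\<lambda>k. s k z) \<longlonglongrightarrow> f z"
    and bound: "\<And>k. AE z in M. z \<in> A \<longrightarrow> \<bar>s k z\<bar> \<le> w z"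
  shows "(\<lambda>k. LINT z:A|M. s k z) \<longlonglongrightarrow> (LINT z:A|M. f z)"
proof -
  have "(\<lambda>k. integral\<^sup>L M (\<lambda>z. indicator A z * s k z)) \<longlonglongrightarrow> integral\<^sup>L M (\<lambda>z. indicator A z * f z)"
  proof (rule integral_dominated_convergence[where w="\<lambda>z. indicator A z * w z"])
    show "integrable M (\<lambda>z. indicator A z * w z)"
      using w unfolding set_integrable_def by simp
    show "AE z in M. (\<lambda>k. indicator A z * s k z) \<longlonglongrightarrow> indicator A z * f z"
      using lim by eventually_elim (auto intro: tendsto_mult_left)
    show "AE z in M. norm (indicator A z * s k z) \<le> indicator A z * w z" for k
      using bound[of k] by eventually_elim (auto simp: indicator_def)
  qed measurable
  then show ?thesis unfolding set_lebesgue_integral_def by simp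
qed

lemma LIMSEQ_zero_obtain_subseq_le_power:
  fixes e :: "nat \<Rightarrow> real"
  assumes "e \<longlonglongrightarrow> 0" and "q > 0"
  obtains r where "strict_mono r" "\<And>k. e (r k) \<le> q ^ k"
proof -
  have "\<forall>k. \<exists>N. \<forall>n\<ge>N. e n \<le> q ^ k"
  proof
    fix k
    obtain N where "\<forall>n\<ge>N. norm (e n - 0) < q ^ k"
      using LIMSEQ_D[OF assms(1), of "q ^ k"] \<open>q > 0\<close> by auto
    then show "\<exists>N. \<forall>n\<ge>N. e n \<le> q ^ k" by force
  qed
  then obtain N where N: "\<And>k n. n \<ge> N k \<Longrightarrow> e n \<le> q ^ k"
    by metis
  define r where "r k = (\<Sum>i\<le>k. N i) + k" for k
  show ?thesis
  proof
    show "strict_mono r"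
      by (rule strict_monoI_Suc) (simp add: r_def)
    show "e (r k) \<le> q ^ k" for k
      by (rule N) (auto simp: r_def intro: member_le_sum[of k "{..k}" N, simplified] trans_le_add1)
  qed
qed

lemma integrable_suminf_nonneg:
  fixes f :: "nat \<Rightarrow> 'a \<Rightarrow> real"
  assumes int: "\<And>i. integrable M (f i)" and nonneg: "\<And>i z. 0 \<le> f i z"
    and summable: "summable (\<lambda>i. integral\<^sup>L M (f i))"
  shows "AE z in M. summable (\<lambda>i. f i z)" "integrable M (\<lambda>z. \<Sum>i. f i z)"
proof -
  have [measurable]: "f i \<in> borel_measurable M" for i using int[of i] by auto
  have "(\<integral>\<^sup>+z. (\<Sum>i. ennreal (f i z)) \<partial>M) = (\<Sum>i. \<integral>\<^sup>+z. ennreal (f i z) \<partial>M)"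
    by (rule nn_integral_suminf) measurable
  also have "\<dots> = (\<Sum>i. ennreal (integral\<^sup>L M (f i)))"
    by (intro suminf_cong nn_integral_eq_integral int AE_I2 nonneg)
  also have "\<dots> = ennreal (\<Sum>i. integral\<^sup>L M (f i))"
    by (intro suminf_ennreal2 summable integral_nonneg_AE AE_I2 nonneg)
  finally have "(\<integral>\<^sup>+z. (\<Sum>i. ennreal (f i z)) \<partial>M) \<noteq> \<infinity>" by simp
  then have "AE z in M. (\<Sum>i. ennreal (f i z)) \<noteq> \<infinity>"
    by (intro nn_integral_PInf_AE) measurable
  then show AE_summable: "AE z in M. summable (\<lambda>i. f i z)"
    by eventually_elim (rule summable_suminf_not_top, auto simp: nonneg)
  show "integrable M (\<lambda>z. \<Sum>i. f i z)"
  proof (rule integrable_suminf[OF int])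
    show "AE z in M. summable (\<lambda>i. norm (f i z))"
      using AE_summable by eventually_elim (simp add: abs_of_nonneg nonneg)
    show "summable (\<lambda>i. \<integral>z. norm (f i z) \<partial>M)"
      using summable by (simp add: abs_of_nonneg nonneg)
  qed
qed

lemma set_integrable_const_finite:
  assumes "A \<in> sets M" "emeasure M A < \<infinity>"
  shows "set_integrable M A (\<lambda>z. c :: real)"
  unfolding set_integrable_def
  using integrable_mult_left[OF integrable_real_indicator[OF assms], of c] by (simp add: mult.commute)

lemma set_integral_abs_le_square:
  fixes f :: "'a \<Rightarrow> real"
  assumes A: "A \<in> sets M" "emeasure M A < \<infinity>" and [measurable]: "f \<in> borel_measurable M"
    and sq: "set_integrable M A (\<lambda>z. (f z)\<^sup>2)" and c: "c > 0"
  shows "set_integrable M A (\<lambda>z. \<bar>f z\<bar>)"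
    and "(LINT z:A|M. \<bar>f z\<bar>) \<le> (c * measure M A + (LINT z:A|M. (f z)\<^sup>2) / c) / 2"
proof -
  have amgm: "\<bar>y\<bar> \<le> (c + y\<^sup>2 / c) / 2" for y :: real
  proof -
    have "0 \<le> (\<bar>y\<bar> - c)\<^sup>2 / c" using c by simp
    also have "\<dots> = y\<^sup>2 / c - 2 * \<bar>y\<bar> + c"
      using c by (simp add: power2_eq_square field_simps)
    finally show ?thesis by simp
  qed
  then have amgm_norm: "norm \<bar>y\<bar> \<le> norm ((c + y\<^sup>2 / c) / 2)" for y :: real
    using order_trans[OF amgm abs_ge_self] by simp
  have bound_int: "set_integrable M A (\<lambda>z. (c + (f z)\<^sup>2 / c) / 2)"
    using set_integrable_const_finite[OF A] sq by auto
  show abs_int: "set_integrable M A (\<lambda>z. \<bar>f z\<bar>)"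
    by (rule set_integrable_bound[OF bound_int])
       (use A amgm_norm in \<open>auto simp: set_borel_measurable_def intro!: AE_I2\<close>)
  have "(LINT z:A|M. \<bar>f z\<bar>) \<le> (LINT z:A|M. (c + (f z)\<^sup>2 / c) / 2)"
    by (rule set_integral_mono[OF abs_int bound_int amgm])
  also have "\<dots> = (c * measure M A + (LINT z:A|M. (f z)\<^sup>2) / c) / 2"
    using A sq set_integrable_const_finite[OF A, of c]
    by (simp add: set_integral_const measure_def)
  finally show "(LINT z:A|M. \<bar>f z\<bar>) \<le> (c * measure M A + (LINT z:A|M. (f z)\<^sup>2) / c) / 2" .
qed

text \<open>The usual proof of completeness of \<open>L\<^sup>1\<close>: summable increments make the series of their
  absolute values an integrable majorant.\<close>

lemma AE_convergent_dominated_of_summable_increments: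
  fixes s :: "nat \<Rightarrow> 'a \<Rightarrow> real"
  assumes [measurable]: "A \<in> sets M" "\<And>k. s k \<in> borel_measurable M"
    and int: "\<And>k. set_integrable M A (s k)"
    and summable: "summable (\<lambda>k. LINT z:A|M. \<bar>s (Suc k) z - s k z\<bar>)"
  obtains G D where "G \<in> borel_measurable M" "set_integrable M A D"
    "AE z in M. z \<in> A \<longrightarrow> (\<lambda>k. s k z) \<longlonglongrightarrow> G z"
    "\<And>k. AE z in M. z \<in> A \<longrightarrow> \<bar>s k z\<bar> \<le> D z"
proof -
  define d where "d k z = s (Suc k) z - s k z" for k z
  define f where "f k z = indicator A z * \<bar>d k z\<bar>" for k z
  have abs_int: "set_integrable M A (\<lambda>z. \<bar>d k z\<bar>)" for k
    unfolding d_def by (intro set_integrable_abs set_integral_diff int)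
  then have f_int: "integrable M (f k)" for k
    unfolding set_integrable_def f_def by simp
  have f_nonneg: "0 \<le> f k z" for k z
    by (simp add: f_def)
  have "summable (\<lambda>k. integral\<^sup>L M (f k))"
    using summable unfolding f_def d_def set_lebesgue_integral_def by simp
  note f_sum = integrable_suminf_nonneg[OF f_int f_nonneg this]
  define D where "D z = \<bar>s 0 z\<bar> + (\<Sum>k. \<bar>d k z\<bar>)" for z
  define G where "G z = lim (\<lambda>k. s k z)" for z
  have D_int: "set_integrable M A D"
  proof -
    have "integrable M (\<lambda>z. indicator A z * \<bar>s 0 z\<bar> + (\<Sum>k. f k z))"
      using set_integrable_abs[OF int[of 0]] f_sum(2) unfolding set_integrable_def
      by (intro Bochner_Integration.integrable_add) simp_all
    moreover have "indicator A z * \<bar>s 0 z\<bar> + (\<Sum>k. f k z) = indicator A z *\<^sub>R D z" for z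
      by (cases "z \<in> A") (simp_all add: f_def D_def)
    ultimately show ?thesis unfolding set_integrable_def by simp
  qed
  have conv: "(\<lambda>k. s k z) \<longlonglongrightarrow> G z \<and> (\<forall>k. \<bar>s k z\<bar> \<le> D z)"
    if "summable (\<lambda>k. \<bar>d k z\<bar>)" for z
  proof -
    have telescope: "s k z = s 0 z + (\<Sum>i<k. d i z)" for k
      unfolding d_def using sum_lessThan_telescope[of "\<lambda>i. s i z" k] by simp
    have "(\<lambda>k. s 0 z + (\<Sum>i<k. d i z)) \<longlonglongrightarrow> s 0 z + (\<Sum>i. d i z)"
      by (rule tendsto_add[OF tendsto_const summable_LIMSEQ[OF summable_rabs_cancel[OF that]]])
    then have "convergent (\<lambda>k. s k z)"
      unfolding telescope[symmetric] by (rule convergentI)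
    moreover have "\<bar>s k z\<bar> \<le> D z" for k
    proof -
      have "\<bar>s k z\<bar> \<le> \<bar>s 0 z\<bar> + (\<Sum>i<k. \<bar>d i z\<bar>)"
        unfolding telescope[of k] by (rule order_trans[OF abs_triangle_ineq add_left_mono[OF sum_abs]])
      also have "\<dots> \<le> D z"
        unfolding D_def by (intro add_left_mono sum_le_suminf that) auto
      finally show ?thesis .
    qed
    ultimately show ?thesis
      unfolding G_def by (simp add: convergent_LIMSEQ_iff)
  qed
  have AE_conv: "AE z in M. z \<in> A \<longrightarrow> (\<lambda>k. s k z) \<longlonglongrightarrow> G z \<and> (\<forall>k. \<bar>s k z\<bar> \<le> D z)"
    using f_sum(1)
  proof eventually_elim
    case (elim z)
    show ?case
    proof
      assume "z \<in> A"
      with elim have "summable (\<lambda>k. \<bar>d k z\<bar>)"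
        by (simp add: f_def)
      then show "(\<lambda>k. s k z) \<longlonglongrightarrow> G z \<and> (\<forall>k. \<bar>s k z\<bar> \<le> D z)"
        by (rule conv)
    qed
  qed
  show ?thesis
  proof (rule that)
    show "G \<in> borel_measurable M"
      unfolding G_def by measurable
    show "AE z in M. z \<in> A \<longrightarrow> (\<lambda>k. s k z) \<longlonglongrightarrow> G z"
      using AE_conv by eventually_elim blast
    show "AE z in M. z \<in> A \<longrightarrow> \<bar>s k z\<bar> \<le> D z" for k
      using AE_conv by eventually_elim blast
  qed (rule D_int)
qed

lemma set_integrable_square_of_AE_limit:
  fixes s :: "nat \<Rightarrow> 'a \<Rightarrow> real"
  assumes [measurable]: "A \<in> sets M" "\<And>k. s k \<in> borel_measurable M" "G \<in> borel_measurable M"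
    and sq: "\<And>k. set_integrable M A (\<lambda>z. (s k z)\<^sup>2)"
    and bounded: "\<And>k. (LINT z:A|M. (s k z)\<^sup>2) \<le> B"
    and lim: "AE z in M. z \<in> A \<longrightarrow> (\<lambda>k. s k z) \<longlonglongrightarrow> G z"
  shows "set_integrable M A (\<lambda>z. (G z)\<^sup>2)"
proof -
  define u where "u k z = ennreal (indicator A z * (s k z)\<^sup>2)" for k z
  have nn_u: "integral\<^sup>N M (u k) \<le> ennreal B" for k
  proof -
    have "integral\<^sup>N M (u k) = ennreal (LINT z:A|M. (s k z)\<^sup>2)"
      using sq[of k] unfolding u_def set_lebesgue_integral_def set_integrable_def
      by (subst nn_integral_eq_integral) auto
    then show ?thesis using bounded[of k] by (simp add: ennreal_leI)
  qed
  have "AE z in M. liminf (\<lambda>k. u k z) = ennreal (indicator A z * (G z)\<^sup>2)"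
    using lim
  proof eventually_elim
    case (elim z)
    show ?case
    proof (cases "z \<in> A")
      case True
      then have "(\<lambda>k. u k z) \<longlonglongrightarrow> ennreal (indicator A z * (G z)\<^sup>2)"
        unfolding u_def using elim by (intro tendsto_ennrealI tendsto_intros) auto
      then show ?thesis by (rule lim_imp_Liminf[rotated]) simp
    qed (simp add: u_def Liminf_const)
  qed
  then have "(\<integral>\<^sup>+z. ennreal (indicator A z * (G z)\<^sup>2) \<partial>M) = (\<integral>\<^sup>+z. liminf (\<lambda>k. u k z) \<partial>M)"
    by (intro nn_integral_cong_AE) auto
  also have "\<dots> \<le> liminf (\<lambda>k. integral\<^sup>N M (u k))"
    by (rule nn_integral_liminf) (simp add: u_def)
  also have "\<dots> \<le> limsup (\<lambda>k. integral\<^sup>N M (u k))"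
    by (rule Liminf_le_Limsup) simp
  also have "\<dots> \<le> ennreal B"
    by (rule Limsup_bounded) (use nn_u in auto)
  finally have "(\<integral>\<^sup>+z. ennreal (norm (indicator A z * (G z)\<^sup>2)) \<partial>M) < \<infinity>"
    by (simp add: abs_mult) (meson ennreal_less_top le_less_trans)
  then have "integrable M (\<lambda>z. indicator A z * (G z)\<^sup>2)"
    by (intro integrableI_bounded) measurable
  then show ?thesis unfolding set_integrable_def by simp
qed

lemma L2_Cauchy_AE_convergent_subseq:
  fixes S :: "nat \<Rightarrow> 'a \<Rightarrow> real"
  assumes A [measurable]: "A \<in> sets M" and A_finite: "emeasure M A < \<infinity>"
    and S_meas [measurable]: "\<And>N. S N \<in> borel_measurable M"
    and sq: "\<And>N. set_integrable M A (\<lambda>z. (S N z)\<^sup>2)"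
    and Cauchy: "\<And>m N. m \<le> N \<Longrightarrow> (LINT z:A|M. (S N z - S m z)\<^sup>2) \<le> e m"
    and e: "e \<longlonglongrightarrow> 0"
    and bounded: "\<And>N. (LINT z:A|M. (S N z)\<^sup>2) \<le> B"
  obtains r G D where "strict_mono r" "G \<in> borel_measurable M" "set_integrable M A D"
    "AE z in M. z \<in> A \<longrightarrow> (\<lambda>k. S (r k) z) \<longlonglongrightarrow> G z"
    "\<And>k. AE z in M. z \<in> A \<longrightarrow> \<bar>S (r k) z\<bar> \<le> D z"
    "set_integrable M A (\<lambda>z. (G z)\<^sup>2)"
proof -
  obtain r where r: "strict_mono r" "\<And>k. e (r k) \<le> (1/4) ^ k"
    using LIMSEQ_zero_obtain_subseq_le_power[OF e, of "1/4"] by auto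
  have diff_sq: "set_integrable M A (\<lambda>z. (S N z - S m z)\<^sup>2)" for m N
  proof (rule set_integrable_bound)
    show "set_integrable M A (\<lambda>z. 2 * (S N z)\<^sup>2 + 2 * (S m z)\<^sup>2)"
      using sq by auto
    have "norm ((a - b)\<^sup>2) \<le> norm (2 * a\<^sup>2 + 2 * (b::real)\<^sup>2)" for a b
    proof -
      have "(a - b)\<^sup>2 \<le> 2 * a\<^sup>2 + 2 * b\<^sup>2"
        using sum_squares_bound[of a "-b"] by (simp add: power2_diff)
      moreover have "0 \<le> 2 * a\<^sup>2 + 2 * b\<^sup>2"
        by (intro add_nonneg_nonneg mult_nonneg_nonneg) simp_all
      ultimately show ?thesis
        by (simp add: abs_of_nonneg)
    qed
    then show "AE z in M. z \<in> A \<longrightarrow> norm ((S N z - S m z)\<^sup>2) \<le> norm (2 * (S N z)\<^sup>2 + 2 * (S m z)\<^sup>2)"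
      by (intro AE_I2 impI)
  qed (simp add: set_borel_measurable_def)
  \<comment> \<open>AM-GM with weight \<open>2\<^sup>-\<^sup>k\<close> turns the \<open>L\<^sup>2\<close> bound \<open>4\<^sup>-\<^sup>k\<close> of an increment into an \<open>L\<^sup>1\<close> bound of order \<open>2\<^sup>-\<^sup>k\<close>.\<close>
  have increment: "(LINT z:A|M. \<bar>S (r (Suc k)) z - S (r k) z\<bar>) \<le> (1/2) ^ k * (measure M A + 1) / 2"
    for k
  proof -
    have "r k \<le> r (Suc k)" using r(1) by (simp add: strict_mono_less_eq)
    then have sq_le: "(LINT z:A|M. (S (r (Suc k)) z - S (r k) z)\<^sup>2) \<le> (1/4) ^ k"
      using Cauchy r(2) order_trans by blast
    have "(1/4::real) ^ k = (1/2) ^ k * (1/2) ^ k"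
      unfolding power_mult_distrib[symmetric] by simp
    then have quarter: "(1/4::real) ^ k / (1/2) ^ k = (1/2) ^ k"
      by simp
    have "(LINT z:A|M. \<bar>S (r (Suc k)) z - S (r k) z\<bar>)
        \<le> ((1/2) ^ k * measure M A + (LINT z:A|M. (S (r (Suc k)) z - S (r k) z)\<^sup>2) / (1/2) ^ k) / 2"
      by (rule set_integral_abs_le_square(2)[OF A A_finite _ diff_sq]) auto
    also have "\<dots> \<le> ((1/2) ^ k * measure M A + (1/4) ^ k / (1/2) ^ k) / 2"
      using sq_le by (intro divide_right_mono add_left_mono) auto
    also have "\<dots> = (1/2) ^ k * (measure M A + 1) / 2"
      unfolding quarter by (simp add: algebra_simps)
    finally show ?thesis .
  qed
  have increments_summable: "summable (\<lambda>k. LINT z:A|M. \<bar>S (r (Suc k)) z - S (r k) z\<bar>)"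
  proof (rule summable_comparison_test)
    show "summable (\<lambda>k. (1/2::real) ^ k * (measure M A + 1) / 2)"
      by (intro summable_divide summable_mult2 summable_geometric) simp
    show "\<exists>N. \<forall>k\<ge>N. norm (LINT z:A|M. \<bar>S (r (Suc k)) z - S (r k) z\<bar>) \<le> (1/2) ^ k * (measure M A + 1) / 2"
      using increment by (auto intro!: exI[of _ 0] simp: set_lebesgue_integral_def set_integral_mono)
  qed
  have S_int: "set_integrable M A (S N)" for N
    using set_integral_abs_le_square(1)[OF A A_finite S_meas sq zero_less_one]
    by (simp add: set_integrable_abs_iff'[OF S_meas A])
  obtain G D where GD: "G \<in> borel_measurable M" "set_integrable M A D"
    "AE z in M. z \<in> A \<longrightarrow> (\<lambda>k. S (r k) z) \<longlonglongrightarrow> G z"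
    "\<And>k. AE z in M. z \<in> A \<longrightarrow> \<bar>S (r k) z\<bar> \<le> D z"
    by (rule AE_convergent_dominated_of_summable_increments[OF A S_meas S_int increments_summable])
       (rule that)
  have G_sq: "set_integrable M A (\<lambda>z. (G z)\<^sup>2)"
    by (rule set_integrable_square_of_AE_limit[OF A _ GD(1) sq bounded GD(3)]) simp
  show ?thesis
    by (rule that[OF r(1) GD G_sq])
qed

section \<open>Orthogonal mode expansions\<close>

lemma integral_cos_int_multiple:
  assumes "m \<noteq> (0::int)"
  shows "integral {0..2*pi} (\<lambda>t. cos (of_int m * t)) = 0"
proof -
  have "((\<lambda>t. cos (of_int m * t)) has_integral
      (sin (of_int m * (2*pi)) / of_int m - sin (of_int m * 0) / of_int m)) {0..2*pi}"
  proof (rule fundamental_theorem_of_calculus)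
    fix t :: real
    have "((\<lambda>t. sin (of_int m * t) / of_int m) has_real_derivative
        cos (of_int m * t) * of_int m / of_int m) (at t within {0..2*pi})"
      by (auto intro!: derivative_eq_intros)
    then show "((\<lambda>t. sin (of_int m * t) / of_int m) has_vector_derivative cos (of_int m * t))
        (at t within {0..2*pi})"
      using assms by (simp add: has_real_derivative_iff_has_vector_derivative)
  qed simp
  moreover have "sin (of_int m * (2*pi)) = 0"
    using sin_npi_int[of "2 * m"] by (simp add: mult_ac)
  ultimately show ?thesis by (simp add: integral_unique)
qed

lemma
  fixes j k :: nat
  assumes "j \<noteq> k"
  shows integral_sin_sin_orthogonal: "integral {0..2*pi} (\<lambda>t. sin (real j * t) * sin (real k * t)) = 0"
    and integral_cos_cos_orthogonal: "integral {0..2*pi} (\<lambda>t. cos (real j * t) * cos (real k * t)) = 0"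
proof -
  have diff: "real j * t - real k * t = of_int (int j - int k) * t"
    and sum: "real j * t + real k * t = of_int (int j + int k) * t" for t
    by (simp_all add: algebra_simps)
  have "int j - int k \<noteq> 0" "int j + int k \<noteq> 0"
    using assms by auto
  note zero = integral_cos_int_multiple[OF this(1)] integral_cos_int_multiple[OF this(2)]
  have int: "(\<lambda>t. cos (of_int (int j - int k) * t)) integrable_on {0..2*pi}"
      "(\<lambda>t. cos (of_int (int j + int k) * t)) integrable_on {0..2*pi}"
    by (auto intro!: integrable_continuous_real continuous_intros)
  show "integral {0..2*pi} (\<lambda>t. sin (real j * t) * sin (real k * t)) = 0"
    unfolding sin_times_sin diff sum using integral_diff[OF int] zero by (simp add: integral_divide)
  show "integral {0..2*pi} (\<lambda>t. cos (real j * t) * cos (real k * t)) = 0"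
    unfolding cos_times_cos diff sum using integral_add[OF int] zero by (simp add: integral_divide)
qed

lemma integral_orthogonal_sum_square:
  fixes f :: "nat \<Rightarrow> real \<Rightarrow> real" and c :: "nat \<Rightarrow> real"
  assumes "finite J" and cont: "\<And>j. continuous_on UNIV (f j)"
    and orth: "\<And>j k. j \<noteq> k \<Longrightarrow> integral {0..2*pi} (\<lambda>t. f j t * f k t) = 0"
  shows "integral {0..2*pi} (\<lambda>t. (\<Sum>j\<in>J. c j * f j t)\<^sup>2)
    = (\<Sum>j\<in>J. (c j)\<^sup>2 * integral {0..2*pi} (\<lambda>t. f j t * f j t))"
proof -
  have prod_int: "(\<lambda>t. f j t * f k t) integrable_on {0..2*pi}" for j k
    by (intro integrable_continuous_real continuous_intros continuous_on_subset[OF cont]) auto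
  have scaled_int: "(\<lambda>t. c j * c k * (f j t * f k t)) integrable_on {0..2*pi}" for j k
    using integrable_on_cmult_left[OF prod_int, of "c j * c k"] by simp
  have "integral {0..2*pi} (\<lambda>t. (\<Sum>j\<in>J. c j * f j t)\<^sup>2)
      = integral {0..2*pi} (\<lambda>t. \<Sum>j\<in>J. \<Sum>k\<in>J. c j * c k * (f j t * f k t))"
    by (simp add: power2_eq_square sum_product mult_ac)
  also have "\<dots> = (\<Sum>j\<in>J. \<Sum>k\<in>J. integral {0..2*pi} (\<lambda>t. c j * c k * (f j t * f k t)))"
    using \<open>finite J\<close> scaled_int by (simp add: integral_sum integrable_sum)
  also have "\<dots> = (\<Sum>j\<in>J. \<Sum>k\<in>J. c j * c k * integral {0..2*pi} (\<lambda>t. f j t * f k t))"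
    by simp
  also have "\<dots> = (\<Sum>j\<in>J. (c j)\<^sup>2 * integral {0..2*pi} (\<lambda>t. f j t * f j t))"
  proof (rule sum.cong[OF refl])
    fix j assume "j \<in> J"
    have "(\<Sum>k\<in>J. c j * c k * integral {0..2*pi} (\<lambda>t. f j t * f k t))
        = (\<Sum>k\<in>J. if k = j then (c j)\<^sup>2 * integral {0..2*pi} (\<lambda>t. f j t * f j t) else 0)"
    proof (rule sum.cong[OF refl])
      show "c j * c k * integral {0..2*pi} (\<lambda>t. f j t * f k t)
          = (if k = j then (c j)\<^sup>2 * integral {0..2*pi} (\<lambda>t. f j t * f j t) else 0)" for k
        using orth[of j k] by (cases "k = j") (auto simp: power2_eq_square)
    qed
    also have "\<dots> = (c j)\<^sup>2 * integral {0..2*pi} (\<lambda>t. f j t * f j t)"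
      using \<open>finite J\<close> \<open>j \<in> J\<close> by simp
    finally show "(\<Sum>k\<in>J. c j * c k * integral {0..2*pi} (\<lambda>t. f j t * f k t))
        = (c j)\<^sup>2 * integral {0..2*pi} (\<lambda>t. f j t * f j t)" .
  qed
  finally show ?thesis .
qed

lemma integral_orthogonal_sum_square_le:
  fixes f :: "nat \<Rightarrow> real \<Rightarrow> real" and c :: "nat \<Rightarrow> real"
  assumes "finite J" and cont: "\<And>j. continuous_on UNIV (f j)"
    and orth: "\<And>j k. j \<noteq> k \<Longrightarrow> integral {0..2*pi} (\<lambda>t. f j t * f k t) = 0"
    and bound: "\<And>j t. \<bar>f j t\<bar> \<le> 1"
  shows "integral {0..2*pi} (\<lambda>t. (\<Sum>j\<in>J. c j * f j t)\<^sup>2) \<le> 2*pi * (\<Sum>j\<in>J. (c j)\<^sup>2)"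
proof -
  have prod_int: "(\<lambda>t. f j t * f k t) integrable_on {0..2*pi}" for j k
    by (intro integrable_continuous_real continuous_intros continuous_on_subset[OF cont]) auto
  have "integral {0..2*pi} (\<lambda>t. (\<Sum>j\<in>J. c j * f j t)\<^sup>2)
      = (\<Sum>j\<in>J. (c j)\<^sup>2 * integral {0..2*pi} (\<lambda>t. f j t * f j t))"
    by (rule integral_orthogonal_sum_square[OF \<open>finite J\<close> cont orth])
  also have "\<dots> \<le> (\<Sum>j\<in>J. (c j)\<^sup>2 * (2*pi))"
  proof (intro sum_mono mult_left_mono)
    fix j
    have "integral {0..2*pi} (\<lambda>t. f j t * f j t) \<le> integral {0..2*pi} (\<lambda>t. 1::real)"
    proof (rule integral_le[OF prod_int])
      fix t
      have "\<bar>f j t\<bar> * \<bar>f j t\<bar> \<le> 1 * 1"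
        by (intro mult_mono bound) auto
      then show "f j t * f j t \<le> 1"
        by (simp add: abs_mult[symmetric])
    qed auto
    then show "integral {0..2*pi} (\<lambda>t. f j t * f j t) \<le> 2*pi" by simp
  qed auto
  finally show ?thesis by (simp add: sum_distrib_left mult_ac)
qed

text \<open>The partial sums of the series defining an element of \<open>V\<close> and of its two termwise partial
  derivatives are of this form.\<close>

definition mode_sum ::
    "(nat \<Rightarrow> real) \<Rightarrow> (nat \<Rightarrow> real \<Rightarrow> real) \<Rightarrow> (nat \<Rightarrow> real \<Rightarrow> real) \<Rightarrow> nat set \<Rightarrow> real \<times> real \<Rightarrow> real"
  where "mode_sum a f g J z = (\<Sum>j\<in>J. a j * f j (fst z) * g j (snd z))"

lemma continuous_on_mode_sum [continuous_intros]:
  assumes "\<And>j. continuous_on UNIV (f j)" "\<And>j. continuous_on UNIV (g j)"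
  shows "continuous_on UNIV (mode_sum a f g J)"
proof -
  have "continuous_on UNIV (\<lambda>z::real \<times> real. f j (fst z))" "continuous_on UNIV (\<lambda>z::real \<times> real. g j (snd z))" for j
    by (intro continuous_on_compose2[OF assms(1)] continuous_on_compose2[OF assms(2)] continuous_intros;
        simp)+
  then show ?thesis
    unfolding mode_sum_def by (intro continuous_intros)
qed

locale orthogonal_modes =
  fixes f g :: "nat \<Rightarrow> real \<Rightarrow> real"
  assumes f_cont: "\<And>j. continuous_on UNIV (f j)" and g_cont: "\<And>j. continuous_on UNIV (g j)"
    and f_orth: "\<And>j k. j \<noteq> k \<Longrightarrow> integral {0..2*pi} (\<lambda>t. f j t * f k t) = 0"
    and f_bound: "\<And>j t. \<bar>f j t\<bar> \<le> 1" and g_bound: "\<And>j x. \<bar>g j x\<bar> \<le> 1"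
begin

lemma set_integral_Om_mode_sum_square_le:
  assumes "finite J"
  shows "(LINT z:Om|lborel. (mode_sum a f g J z)\<^sup>2) \<le> 2*pi\<^sup>2 * (\<Sum>j\<in>J. (a j)\<^sup>2)"
proof -
  have cont: "continuous_on UNIV (\<lambda>z. (mode_sum a f g J z)\<^sup>2)"
    by (intro continuous_intros f_cont g_cont)
  have inner: "integral {0..2*pi} (\<lambda>t. (mode_sum a f g J (t, x))\<^sup>2) \<le> 2*pi * (\<Sum>j\<in>J. (a j)\<^sup>2)" for x
  proof -
    have "integral {0..2*pi} (\<lambda>t. (mode_sum a f g J (t, x))\<^sup>2)
        = integral {0..2*pi} (\<lambda>t. (\<Sum>j\<in>J. (a j * g j x) * f j t)\<^sup>2)"
      by (simp add: mode_sum_def mult_ac)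
    also have "\<dots> \<le> 2*pi * (\<Sum>j\<in>J. (a j * g j x)\<^sup>2)"
      by (rule integral_orthogonal_sum_square_le[OF assms f_cont f_orth f_bound])
    also have "\<dots> \<le> 2*pi * (\<Sum>j\<in>J. (a j)\<^sup>2)"
      using g_bound by (intro mult_left_mono sum_mono)
        (auto simp: power_mult_distrib abs_square_le_1 mult_left_le)
    finally show ?thesis .
  qed
  have "(LINT z:Om|lborel. (mode_sum a f g J z)\<^sup>2)
      = integral {0..pi} (\<lambda>x. integral {0..2*pi} (\<lambda>t. (mode_sum a f g J (t, x))\<^sup>2))"
    using set_integral_Om_iterated_xt[OF cont] by simp
  also have "\<dots> \<le> integral {0..pi} (\<lambda>x. 2*pi * (\<Sum>j\<in>J. (a j)\<^sup>2))"
    using inner continuous_on_subset[OF continuous_on_integral_parameter[OF cont]]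
    by (intro integral_le integrable_continuous_real) auto
  also have "\<dots> = 2*pi\<^sup>2 * (\<Sum>j\<in>J. (a j)\<^sup>2)"
    by (simp add: power2_eq_square)
  finally show ?thesis .
qed

lemma mode_sum_L2_Cauchy:
  assumes "summable (\<lambda>j. (a j)\<^sup>2)"
  obtains e C where "e \<longlonglongrightarrow> 0"
    "\<And>m N. m \<le> N \<Longrightarrow> (LINT z:Om|lborel. (mode_sum a f g {..<N} z - mode_sum a f g {..<m} z)\<^sup>2) \<le> e m"
    "\<And>N. (LINT z:Om|lborel. (mode_sum a f g {..<N} z)\<^sup>2) \<le> C"
proof
  define T where "T = (\<Sum>j. (a j)\<^sup>2)"
  have partial: "(\<Sum>j<N. (a j)\<^sup>2) \<le> T" for N
    unfolding T_def by (intro sum_le_suminf assms) auto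
  show "(\<lambda>m. 2*pi\<^sup>2 * (T - (\<Sum>j<m. (a j)\<^sup>2))) \<longlonglongrightarrow> 0"
    using tendsto_mult_right[OF tendsto_diff[OF tendsto_const summable_LIMSEQ[OF assms]], of T "2*pi\<^sup>2"]
    unfolding T_def by simp
  show "(LINT z:Om|lborel. (mode_sum a f g {..<N} z - mode_sum a f g {..<m} z)\<^sup>2)
      \<le> 2*pi\<^sup>2 * (T - (\<Sum>j<m. (a j)\<^sup>2))" if "m \<le> N" for m N
  proof -
    have split: "sum h {..<N} = sum h {..<m} + sum h {m..<N}" for h :: "nat \<Rightarrow> real"
      using that by (metis atLeast0LessThan le0 sum.atLeastLessThan_concat)
    have "mode_sum a f g {..<N} z - mode_sum a f g {..<m} z = mode_sum a f g {m..<N} z" for z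
      unfolding mode_sum_def split by simp
    then have "(LINT z:Om|lborel. (mode_sum a f g {..<N} z - mode_sum a f g {..<m} z)\<^sup>2)
        = (LINT z:Om|lborel. (mode_sum a f g {m..<N} z)\<^sup>2)"
      by simp
    also have "\<dots> \<le> 2*pi\<^sup>2 * (\<Sum>j\<in>{m..<N}. (a j)\<^sup>2)"
      by (rule set_integral_Om_mode_sum_square_le) simp
    also have "\<dots> \<le> 2*pi\<^sup>2 * (T - (\<Sum>j<m. (a j)\<^sup>2))"
    proof (rule mult_left_mono)
      show "(\<Sum>j\<in>{m..<N}. (a j)\<^sup>2) \<le> T - (\<Sum>j<m. (a j)\<^sup>2)"
        using split[of "\<lambda>j. (a j)\<^sup>2"] partial[of N] by linarith
    qed simp
    finally show ?thesis .
  qed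
  show "(LINT z:Om|lborel. (mode_sum a f g {..<N} z)\<^sup>2) \<le> 2*pi\<^sup>2 * T" for N
    using set_integral_Om_mode_sum_square_le[of "{..<N}" a] partial[of N]
    by (smt (verit) finite_lessThan mult_left_mono pi_gt_zero zero_le_power2)
qed

end

section \<open>Integration by parts against smooth test functions\<close>

lemma smooth2_differentiable: "smooth2 \<phi> \<Longrightarrow> \<phi> differentiable (at z)"
  by (erule smooth2.cases) (metis prod.collapse)

lemma smooth2_dt: "smooth2 \<phi> \<Longrightarrow> smooth2 (dt \<phi>)"
  by (erule smooth2.cases) auto

lemma smooth2_dx: "smooth2 \<phi> \<Longrightarrow> smooth2 (dx \<phi>)"
  by (erule smooth2.cases) auto

lemma smooth2_continuous: "smooth2 \<phi> \<Longrightarrow> continuous_on UNIV \<phi>"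
  by (meson continuous_at_imp_continuous_on differentiable_imp_continuous_within smooth2_differentiable)

lemma smooth2_has_real_derivative_dt:
  assumes "smooth2 \<phi>"
  shows "((\<lambda>s. \<phi> (s, x)) has_real_derivative dt \<phi> (t, x)) (at t)"
proof -
  have "(\<lambda>s. (s, x)) differentiable (at t)"
    by (rule differentiableI) (auto intro!: derivative_eq_intros)
  then have "(\<lambda>s. \<phi> (s, x)) differentiable (at t)"
    using differentiable_chain_at[of "\<lambda>s. (s, x)" t \<phi>] smooth2_differentiable[OF assms]
    by (simp add: o_def)
  then show ?thesis
    unfolding dt_def by (simp add: DERIV_deriv_iff_real_differentiable)
qed

lemma smooth2_has_real_derivative_dx:
  assumes "smooth2 \<phi>"
  shows "((\<lambda>y. \<phi> (t, y)) has_real_derivative dx \<phi> (t, x)) (at x)"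
proof -
  have "(\<lambda>y. (t, y)) differentiable (at x)"
    by (rule differentiableI) (auto intro!: derivative_eq_intros)
  then have "(\<lambda>y. \<phi> (t, y)) differentiable (at x)"
    using differentiable_chain_at[of "\<lambda>y. (t, y)" x \<phi>] smooth2_differentiable[OF assms]
    by (simp add: o_def)
  then show ?thesis
    unfolding dx_def by (simp add: DERIV_deriv_iff_real_differentiable)
qed

lemma integral_by_parts_equal_ends:
  fixes u \<phi> :: "real \<Rightarrow> real"
  assumes "a \<le> b"
    and u: "\<And>x. (u has_real_derivative u' x) (at x)" and \<phi>: "\<And>x. (\<phi> has_real_derivative \<phi>' x) (at x)"
    and "continuous_on {a..b} u'" "continuous_on {a..b} \<phi>'"
    and ends: "u b * \<phi> b = u a * \<phi> a"
  shows "integral {a..b} (\<lambda>x. u x * \<phi>' x) = - integral {a..b} (\<lambda>x. u' x * \<phi> x)"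
proof -
  have "continuous_on {a..b} u" "continuous_on {a..b} \<phi>"
    using u \<phi> by (auto intro!: continuous_at_imp_continuous_on DERIV_isCont)
  then have int: "(\<lambda>x. u' x * \<phi> x) integrable_on {a..b}" "(\<lambda>x. u x * \<phi>' x) integrable_on {a..b}"
    using assms by (auto intro!: integrable_continuous_real continuous_intros)
  have "((\<lambda>x. u' x * \<phi> x + u x * \<phi>' x) has_integral (u b * \<phi> b - u a * \<phi> a)) {a..b}"
  proof (rule fundamental_theorem_of_calculus[OF \<open>a \<le> b\<close>])
    fix x
    have "((\<lambda>x. u x * \<phi> x) has_real_derivative u' x * \<phi> x + u x * \<phi>' x) (at x)"
      by (subst mult.commute[of "u x"]) (rule DERIV_mult[OF u \<phi>])
    then show "((\<lambda>x. u x * \<phi> x) has_vector_derivative u' x * \<phi> x + u x * \<phi>' x) (at x within {a..b})"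
      by (simp add: has_real_derivative_iff_has_vector_derivative has_vector_derivative_at_within)
  qed
  then have "integral {a..b} (\<lambda>x. u' x * \<phi> x + u x * \<phi>' x) = 0"
    using ends by (simp add: integral_unique)
  then show ?thesis
    using integral_add[OF int] by simp
qed

lemma set_integral_Om_by_parts_dt:
  assumes \<phi>: "smooth2 \<phi>" "t_periodic \<phi>" and u_per: "t_periodic u"
    and u_deriv: "\<And>t x. ((\<lambda>s. u (s, x)) has_real_derivative u_t (t, x)) (at t)"
    and u_cont: "continuous_on UNIV u" "continuous_on UNIV u_t"
  shows "(LINT z:Om|lborel. u z * dt \<phi> z) = - (LINT z:Om|lborel. u_t z * \<phi> z)"
proof -
  have \<phi>_cont: "continuous_on UNIV \<phi>" "continuous_on UNIV (dt \<phi>)"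
    using \<phi>(1) by (auto intro: smooth2_continuous smooth2_dt)
  have slice: "continuous_on {0..2*pi} (\<lambda>t. h (t, x))" if "continuous_on UNIV h" for h :: "real \<times> real \<Rightarrow> real" and x
    by (intro continuous_on_compose2[OF that]) (auto intro!: continuous_intros)
  have inner: "integral {0..2*pi} (\<lambda>t. u (t, x) * dt \<phi> (t, x))
      = - integral {0..2*pi} (\<lambda>t. u_t (t, x) * \<phi> (t, x))" for x
  proof (rule integral_by_parts_equal_ends)
    show "u (2*pi, x) * \<phi> (2*pi, x) = u (0, x) * \<phi> (0, x)"
      using u_per \<phi>(2) unfolding t_periodic_def by (metis add_0)
  qed (auto intro: u_deriv smooth2_has_real_derivative_dt[OF \<phi>(1)] slice[OF u_cont(2)] slice[OF \<phi>_cont(2)])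
  have lhs_cont: "continuous_on UNIV (\<lambda>z. u z * dt \<phi> z)"
    and rhs_cont: "continuous_on UNIV (\<lambda>z. u_t z * \<phi> z)"
    by (intro continuous_intros u_cont \<phi>_cont)+
  show ?thesis
    unfolding set_integral_Om_iterated_xt[OF lhs_cont] set_integral_Om_iterated_xt[OF rhs_cont] inner
    by (rule integral_neg)
qed

lemma set_integral_Om_by_parts_dx:
  assumes \<phi>: "smooth2 \<phi>" and u_0: "\<And>t. u (t, 0) = 0" and u_pi: "\<And>t. u (t, pi) = 0"
    and u_deriv: "\<And>t x. ((\<lambda>y. u (t, y)) has_real_derivative u_x (t, x)) (at x)"
    and u_cont: "continuous_on UNIV u" "continuous_on UNIV u_x"
  shows "(LINT z:Om|lborel. u z * dx \<phi> z) = - (LINT z:Om|lborel. u_x z * \<phi> z)"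
proof -
  have \<phi>_cont: "continuous_on UNIV \<phi>" "continuous_on UNIV (dx \<phi>)"
    using \<phi> by (auto intro: smooth2_continuous smooth2_dx)
  have slice: "continuous_on {0..pi} (\<lambda>x. h (t, x))" if "continuous_on UNIV h" for h :: "real \<times> real \<Rightarrow> real" and t
    by (intro continuous_on_compose2[OF that]) (auto intro!: continuous_intros)
  have inner: "integral {0..pi} (\<lambda>x. u (t, x) * dx \<phi> (t, x))
      = - integral {0..pi} (\<lambda>x. u_x (t, x) * \<phi> (t, x))" for t
    by (rule integral_by_parts_equal_ends)
       (auto intro: u_deriv smooth2_has_real_derivative_dx[OF \<phi>] slice[OF u_cont(2)] slice[OF \<phi>_cont(2)]
         simp: u_0 u_pi)
  have lhs_cont: "continuous_on UNIV (\<lambda>z. u z * dx \<phi> z)"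
    and rhs_cont: "continuous_on UNIV (\<lambda>z. u_x z * \<phi> z)"
    by (intro continuous_intros u_cont \<phi>_cont)+
  show ?thesis
    unfolding set_integral_Om_iterated_tx[OF lhs_cont] set_integral_Om_iterated_tx[OF rhs_cont] inner
    by (rule integral_neg)
qed

lemma weak_derivative_power_of_limit:
  fixes S dS :: "nat \<Rightarrow> real \<times> real \<Rightarrow> real" and D :: "(real \<times> real \<Rightarrow> real) \<Rightarrow> real \<times> real \<Rightarrow> real"
  assumes S_cont: "\<And>N. continuous_on UNIV (S N)" and S_bound: "\<And>N z. \<bar>S N z\<bar> \<le> B"
    and S_lim: "\<And>z. (\<lambda>N. S N z) \<longlonglongrightarrow> s z"
    and dS_cont: "\<And>N. continuous_on UNIV (dS N)"
    and Cauchy: "\<And>m N. m \<le> N \<Longrightarrow> (LINT z:Om|lborel. (dS N z - dS m z)\<^sup>2) \<le> e m"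
    and e: "e \<longlonglongrightarrow> 0"
    and bounded: "\<And>N. (LINT z:Om|lborel. (dS N z)\<^sup>2) \<le> C"
    and T_cont: "\<And>\<phi>. \<phi> \<in> T \<Longrightarrow> continuous_on UNIV \<phi> \<and> continuous_on UNIV (D \<phi>)"
    and parts: "\<And>N \<phi>. \<phi> \<in> T \<Longrightarrow> (LINT z:Om|lborel. (S N z)^n * D \<phi> z)
                  = - (LINT z:Om|lborel. real n * (S N z)^(n-1) * dS N z * \<phi> z)"
  shows "\<exists>g. L2_Om g \<and>
    (\<forall>\<phi>\<in>T. (LINT z:Om|lborel. (s z)^n * D \<phi> z) = - (LINT z:Om|lborel. g z * \<phi> z))"
proof -
  have [measurable]: "S N \<in> borel_measurable lborel" "dS N \<in> borel_measurable lborel" for N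
    using S_cont dS_cont by (simp_all add: borel_measurable_continuous_onI)
  have [measurable]: "s \<in> borel_measurable lborel"
    by (rule borel_measurable_LIMSEQ_real[OF S_lim]) simp
  obtain r G Dom where r: "strict_mono r" and [measurable]: "G \<in> borel_measurable lborel"
    and Dom: "set_integrable lborel Om Dom"
    and dS_lim: "AE z in lborel. z \<in> Om \<longrightarrow> (\<lambda>k. dS (r k) z) \<longlonglongrightarrow> G z"
    and dS_bound: "\<And>k. AE z in lborel. z \<in> Om \<longrightarrow> \<bar>dS (r k) z\<bar> \<le> Dom z"
    and G_sq: "set_integrable lborel Om (\<lambda>z. (G z)\<^sup>2)"
    by (rule L2_Cauchy_AE_convergent_subseq[OF Om_sets emeasure_Om_finite _ _ Cauchy e bounded])
       (auto intro: set_integrable_Om_continuous continuous_intros dS_cont)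
  have S_sub_lim: "(\<lambda>k. S (r k) z) \<longlonglongrightarrow> s z" for z
    using LIMSEQ_subseq_LIMSEQ[OF S_lim r] by (simp add: o_def)
  have s_bound: "\<bar>s z\<bar> \<le> B" for z
    using S_bound by (intro LIMSEQ_le_const2[OF tendsto_rabs[OF S_lim]]) auto
  have B: "0 \<le> B"
    using S_bound[of 0 undefined] by linarith
  have pow_bound: "\<bar>real n * y ^ (n-1)\<bar> \<le> real n * B ^ (n-1)" if "\<bar>y\<bar> \<le> B" for y
    using that by (simp add: abs_mult power_abs mult_left_mono power_mono)
  define g where "g z = real n * (s z)^(n-1) * G z" for z
  have [measurable]: "g \<in> borel_measurable lborel"
    unfolding g_def by measurable
  have "L2_Om G"
    unfolding L2_Om_def set_borel_measurable_def using G_sq by simp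
  then have "L2_Om g"
    unfolding g_def using pow_bound[OF s_bound] by (intro L2_Om_bounded_mult) auto
  moreover have "(LINT z:Om|lborel. (s z)^n * D \<phi> z) = - (LINT z:Om|lborel. g z * \<phi> z)"
    if "\<phi> \<in> T" for \<phi>
  proof -
    have \<phi>_cont: "continuous_on UNIV \<phi>" "continuous_on UNIV (D \<phi>)"
      using T_cont[OF that] by auto
    have [measurable]: "\<phi> \<in> borel_measurable lborel" "D \<phi> \<in> borel_measurable lborel"
      using \<phi>_cont by (simp_all add: borel_measurable_continuous_onI)
    obtain K where K: "\<And>z. z \<in> Om \<Longrightarrow> \<bar>\<phi> z\<bar> \<le> K"
      using continuous_bounded_on_Om[OF \<phi>_cont(1)] by blast
    have lhs: "(\<lambda>k. LINT z:Om|lborel. (S (r k) z)^n * D \<phi> z) \<longlonglongrightarrow> (LINT z:Om|lborel. (s z)^n * D \<phi> z)"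
    proof (rule set_integral_dominated_convergence[where w="\<lambda>z. B^n * \<bar>D \<phi> z\<bar>"])
      show "set_integrable lborel Om (\<lambda>z. B^n * \<bar>D \<phi> z\<bar>)"
        by (intro set_integrable_Om_continuous continuous_intros \<phi>_cont)
      show "AE z in lborel. z \<in> Om \<longrightarrow> (\<lambda>k. (S (r k) z)^n * D \<phi> z) \<longlonglongrightarrow> (s z)^n * D \<phi> z"
        by (intro AE_I2 impI tendsto_intros S_sub_lim)
      show "AE z in lborel. z \<in> Om \<longrightarrow> \<bar>(S (r k) z)^n * D \<phi> z\<bar> \<le> B^n * \<bar>D \<phi> z\<bar>" for k
        using S_bound by (intro AE_I2 impI) (simp add: abs_mult power_abs power_mono mult_right_mono)
    qed measurable
    have rhs: "(\<lambda>k. LINT z:Om|lborel. real n * (S (r k) z)^(n-1) * dS (r k) z * \<phi> z)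
        \<longlonglongrightarrow> (LINT z:Om|lborel. g z * \<phi> z)"
    proof (rule set_integral_dominated_convergence[where w="\<lambda>z. real n * B^(n-1) * K * Dom z"])
      show "set_integrable lborel Om (\<lambda>z. real n * B^(n-1) * K * Dom z)"
        using Dom by simp
      show "AE z in lborel. z \<in> Om \<longrightarrow>
          (\<lambda>k. real n * (S (r k) z)^(n-1) * dS (r k) z * \<phi> z) \<longlonglongrightarrow> g z * \<phi> z"
        using dS_lim by eventually_elim (auto simp: g_def intro!: tendsto_intros S_sub_lim)
      show "AE z in lborel. z \<in> Om \<longrightarrow>
          \<bar>real n * (S (r k) z)^(n-1) * dS (r k) z * \<phi> z\<bar> \<le> real n * B^(n-1) * K * Dom z" for k
        using dS_bound[of k]
      proof eventually_elim
        case (elim z)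
        have "\<bar>real n * (S (r k) z)^(n-1) * dS (r k) z * \<phi> z\<bar>
            = \<bar>real n * (S (r k) z)^(n-1)\<bar> * \<bar>dS (r k) z\<bar> * \<bar>\<phi> z\<bar>"
          by (simp add: abs_mult)
        also have "\<dots> \<le> real n * B^(n-1) * Dom z * K" if "z \<in> Om"
        proof -
          have dS_le: "\<bar>dS (r k) z\<bar> \<le> Dom z"
            using elim that by simp
          have nB: "0 \<le> real n * B^(n-1)"
            using B by simp
          have "\<bar>real n * (S (r k) z)^(n-1)\<bar> * \<bar>dS (r k) z\<bar> \<le> real n * B^(n-1) * Dom z"
            by (rule mult_mono[OF pow_bound[OF S_bound] dS_le nB abs_ge_zero])
          moreover have "0 \<le> real n * B^(n-1) * Dom z"
            using nB order_trans[OF abs_ge_zero dS_le] by simp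
          ultimately show ?thesis
            by (rule mult_mono[OF _ K[OF that] _ abs_ge_zero])
        qed
        finally show ?case by (simp add: mult_ac)
      qed
    qed measurable
    show ?thesis
      using LIMSEQ_unique[OF lhs] tendsto_minus[OF rhs] parts[OF that] by simp
  qed
  ultimately show ?thesis
    by blast
qed

section \<open>The space \<open>V\<close>\<close>

definition V_fun :: "(nat \<Rightarrow> real) \<Rightarrow> real \<times> real \<Rightarrow> real" where
  "V_fun \<xi> = (\<lambda>(t, x). \<Sum>j. \<xi> j * cos (real j * t) * sin (real j * x))"

definition V_partial :: "(nat \<Rightarrow> real) \<Rightarrow> nat \<Rightarrow> real \<times> real \<Rightarrow> real" where
  "V_partial \<xi> N = mode_sum \<xi> (\<lambda>j t. cos (real j * t)) (\<lambda>j x. sin (real j * x)) {..<N}"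

lemma Vsp_eq: "Vsp = {V_fun \<xi> | \<xi>. summable (\<lambda>j. (real j)\<^sup>2 * (\<xi> j)\<^sup>2)}"
  unfolding Vsp_def V_fun_def ..

lemma summable_abs_of_summable_weighted_square:
  fixes \<xi> :: "nat \<Rightarrow> real"
  assumes "summable (\<lambda>j. (real j)\<^sup>2 * (\<xi> j)\<^sup>2)"
  shows "summable (\<lambda>j. \<bar>\<xi> j\<bar>)"
proof (rule summable_comparison_test)
  show "summable (\<lambda>j. ((real j)\<^sup>2 * (\<xi> j)\<^sup>2 + inverse ((real j)\<^sup>2)) / 2)"
    using assms inverse_power_summable[of 2, where 'a=real] by (intro summable_divide summable_add) auto
  have "\<bar>\<xi> j\<bar> \<le> ((real j)\<^sup>2 * (\<xi> j)\<^sup>2 + inverse ((real j)\<^sup>2)) / 2" if "j \<ge> 1" for j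
  proof -
    have "0 \<le> (real j * \<bar>\<xi> j\<bar> - inverse (real j))\<^sup>2" by simp
    also have "\<dots> = (real j)\<^sup>2 * (\<xi> j)\<^sup>2 + inverse ((real j)\<^sup>2) - 2 * \<bar>\<xi> j\<bar>"
      using that by (simp add: power2_eq_square field_simps)
    finally show ?thesis by simp
  qed
  then show "\<exists>N. \<forall>j\<ge>N. norm \<bar>\<xi> j\<bar> \<le> ((real j)\<^sup>2 * (\<xi> j)\<^sup>2 + inverse ((real j)\<^sup>2)) / 2"
    by auto
qed

lemma V_term_bound: "\<bar>\<xi> j * cos (real j * t) * sin (real j * x)\<bar> \<le> \<bar>\<xi> j\<bar>"
proof -
  have "\<bar>cos (real j * t)\<bar> * \<bar>sin (real j * x)\<bar> \<le> 1"
    by (intro mult_le_one) auto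
  then show ?thesis
    by (simp add: abs_mult mult.assoc mult_left_le)
qed

lemma continuous_on_V_partial [continuous_intros]: "continuous_on UNIV (V_partial \<xi> N)"
  unfolding V_partial_def by (intro continuous_intros)

lemma V_partial_bound:
  assumes "summable (\<lambda>j. \<bar>\<xi> j\<bar>)"
  shows "\<bar>V_partial \<xi> N z\<bar> \<le> (\<Sum>j. \<bar>\<xi> j\<bar>)"
proof -
  have "\<bar>V_partial \<xi> N z\<bar> \<le> (\<Sum>j<N. \<bar>\<xi> j\<bar>)"
    unfolding V_partial_def mode_sum_def by (rule order_trans[OF sum_abs sum_mono[OF V_term_bound]])
  also have "\<dots> \<le> (\<Sum>j. \<bar>\<xi> j\<bar>)"
    by (intro sum_le_suminf assms) auto
  finally show ?thesis .
qed

lemma uniform_limit_V_partial: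
  assumes "summable (\<lambda>j. \<bar>\<xi> j\<bar>)"
  shows "uniform_limit UNIV (V_partial \<xi>) (V_fun \<xi>) sequentially"
proof -
  have "uniform_limit UNIV (\<lambda>N z. \<Sum>j<N. \<xi> j * cos (real j * fst z) * sin (real j * snd z))
      (\<lambda>z. \<Sum>j. \<xi> j * cos (real j * fst z) * sin (real j * snd z)) sequentially"
    by (rule Weierstrass_m_test[OF _ assms]) (simp add: V_term_bound)
  then show ?thesis
    unfolding V_partial_def mode_sum_def V_fun_def by (simp add: case_prod_beta')
qed

lemma V_partial_tendsto:
  assumes "summable (\<lambda>j. \<bar>\<xi> j\<bar>)"
  shows "(\<lambda>N. V_partial \<xi> N z) \<longlonglongrightarrow> V_fun \<xi> z"
  using tendsto_uniform_limitI[OF uniform_limit_V_partial[OF assms]] by simp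

lemma continuous_on_V_fun:
  assumes "summable (\<lambda>j. \<bar>\<xi> j\<bar>)"
  shows "continuous_on UNIV (V_fun \<xi>)"
  by (rule uniform_limit_theorem[OF _ uniform_limit_V_partial[OF assms]])
     (auto intro!: always_eventually continuous_on_V_partial)

lemma V_partial_odd_reflection: "V_partial \<xi> N (t + pi, pi - x) = - V_partial \<xi> N (t, x)"
proof -
  have "cos (real j * (t + pi)) * sin (real j * (pi - x)) = - (cos (real j * t) * sin (real j * x))" for j
  proof -
    have "cos (real j * (t + pi)) = (-1)^j * cos (real j * t)"
      by (simp add: distrib_left cos_add)
    moreover have "sin (real j * (pi - x)) = - ((-1)^j * sin (real j * x))"
      by (simp add: right_diff_distrib sin_diff)
    moreover have "(-1::real)^j * (-1)^j = 1"
      by (simp flip: power_add)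
    ultimately show ?thesis
      by (metis (no_types, lifting) minus_mult_right mult.assoc mult.left_commute mult_1)
  qed
  then show ?thesis
    unfolding V_partial_def mode_sum_def by (simp add: mult.assoc sum_negf)
qed

lemma V_fun_odd_reflection:
  assumes "summable (\<lambda>j. \<bar>\<xi> j\<bar>)"
  shows "V_fun \<xi> (t + pi, pi - x) = - V_fun \<xi> (t, x)"
  using V_partial_tendsto[OF assms, of "(t + pi, pi - x)"] tendsto_minus[OF V_partial_tendsto[OF assms]]
  by (simp add: V_partial_odd_reflection LIMSEQ_unique)

lemma t_periodic_of_odd_reflection:
  assumes "\<And>t x. u (t + pi, pi - x) = - u (t, x)"
  shows "t_periodic u"
  unfolding t_periodic_def
proof (intro allI)
  fix t x
  have "u (t + 2*pi, x) = u ((t + pi) + pi, pi - (pi - x))"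
    by (simp add: algebra_simps)
  then show "u (t + 2*pi, x) = u (t, x)"
    by (simp only: assms minus_minus)
qed

lemma t_periodic_V_partial: "t_periodic (V_partial \<xi> N)"
  by (rule t_periodic_of_odd_reflection) (rule V_partial_odd_reflection)

lemma t_periodic_V_fun:
  assumes "summable (\<lambda>j. \<bar>\<xi> j\<bar>)"
  shows "t_periodic (V_fun \<xi>)"
  by (rule t_periodic_of_odd_reflection) (rule V_fun_odd_reflection[OF assms])

lemma t_periodic_power: "t_periodic u \<Longrightarrow> t_periodic (\<lambda>z. (u z)^n)"
  by (simp add: t_periodic_def)

lemma V_fun_even: "V_fun \<xi> (- t, x) = V_fun \<xi> (t, x)"
  by (simp add: V_fun_def)

lemma V_partial_boundary: "V_partial \<xi> N (t, 0) = 0" "V_partial \<xi> N (t, pi) = 0"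
  unfolding V_partial_def mode_sum_def by (simp_all add: mult.commute)

lemma V_partial_has_real_derivative_t:
  "((\<lambda>s. V_partial \<xi> N (s, x)) has_real_derivative
     mode_sum (\<lambda>j. - real j * \<xi> j) (\<lambda>j t. sin (real j * t)) (\<lambda>j x. sin (real j * x)) {..<N} (t, x)) (at t)"
  unfolding V_partial_def mode_sum_def by (auto intro!: derivative_eq_intros sum.cong)

lemma V_partial_has_real_derivative_x:
  "((\<lambda>y. V_partial \<xi> N (t, y)) has_real_derivative
     mode_sum (\<lambda>j. real j * \<xi> j) (\<lambda>j t. cos (real j * t)) (\<lambda>j x. cos (real j * x)) {..<N} (t, x)) (at x)"
  unfolding V_partial_def mode_sum_def by (auto intro!: derivative_eq_intros sum.cong)

lemma has_real_derivative_power_mult: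
  assumes "(f has_real_derivative f') (at x)"
  shows "((\<lambda>y. (f y)^n) has_real_derivative real n * (f x)^(n-1) * f') (at x)"
  using DERIV_power[OF assms, of n] by (simp add: mult_ac)

text \<open>The derivative series have square-summable coefficients \<open>j \<xi>\<^sub>j\<close> and are orthogonal in \<open>t\<close>,
  so their partial sums are Cauchy in \<open>L\<^sup>2(\<Omega>)\<close>; this yields the weak derivatives of \<open>v\<^sup>n\<close>.\<close>

lemma V_power_weak_dt:
  assumes \<xi>: "summable (\<lambda>j. (real j)\<^sup>2 * (\<xi> j)\<^sup>2)"
  shows "\<exists>g. L2_Om g \<and> (\<forall>\<phi>\<in>test_per.
     (LINT z:Om|lborel. (V_fun \<xi> z)^n * dt \<phi> z) = - (LINT z:Om|lborel. g z * \<phi> z))"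
proof -
  define dS where "dS = mode_sum (\<lambda>j. - real j * \<xi> j) (\<lambda>j t. sin (real j * t)) (\<lambda>j x. sin (real j * x))"
  interpret orthogonal_modes "\<lambda>j t. sin (real j * t)" "\<lambda>j x. sin (real j * x)"
    by unfold_locales (auto intro!: continuous_intros integral_sin_sin_orthogonal)
  have coeff_sq: "summable (\<lambda>j. (- real j * \<xi> j)\<^sup>2)"
    using \<xi> by (simp add: power_mult_distrib)
  obtain e C where e: "e \<longlonglongrightarrow> 0"
    "\<And>m N. m \<le> N \<Longrightarrow> (LINT z:Om|lborel. (dS {..<N} z - dS {..<m} z)\<^sup>2) \<le> e m"
    "\<And>N. (LINT z:Om|lborel. (dS {..<N} z)\<^sup>2) \<le> C"
    by (rule mode_sum_L2_Cauchy[OF coeff_sq]) (rule that[unfolded dS_def])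
  have abs_summable: "summable (\<lambda>j. \<bar>\<xi> j\<bar>)"
    by (rule summable_abs_of_summable_weighted_square[OF \<xi>])
  show ?thesis
  proof (rule weak_derivative_power_of_limit[where T=test_per and dS="\<lambda>N. dS {..<N}"])
    fix N and \<phi> assume "\<phi> \<in> test_per"
    then have "smooth2 \<phi>" "t_periodic \<phi>" by (auto simp: test_per_def)
    then show "(LINT z:Om|lborel. (V_partial \<xi> N z)^n * dt \<phi> z)
        = - (LINT z:Om|lborel. real n * (V_partial \<xi> N z)^(n-1) * dS {..<N} z * \<phi> z)"
      unfolding dS_def
      by (intro set_integral_Om_by_parts_dt t_periodic_power t_periodic_V_partial
          has_real_derivative_power_mult V_partial_has_real_derivative_t continuous_intros f_cont g_cont)
  qed (use e abs_summable V_partial_bound V_partial_tendsto smooth2_continuous smooth2_dt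
       in \<open>auto simp: test_per_def dS_def intro!: continuous_intros f_cont g_cont\<close>)
qed

lemma V_power_weak_dx:
  assumes \<xi>: "summable (\<lambda>j. (real j)\<^sup>2 * (\<xi> j)\<^sup>2)" and n: "n \<ge> 1"
  shows "\<exists>g. L2_Om g \<and> (\<forall>\<phi>\<in>test_per.
     (LINT z:Om|lborel. (V_fun \<xi> z)^n * dx \<phi> z) = - (LINT z:Om|lborel. g z * \<phi> z))"
proof -
  define dS where "dS = mode_sum (\<lambda>j. real j * \<xi> j) (\<lambda>j t. cos (real j * t)) (\<lambda>j x. cos (real j * x))"
  interpret orthogonal_modes "\<lambda>j t. cos (real j * t)" "\<lambda>j x. cos (real j * x)"
    by unfold_locales (auto intro!: continuous_intros integral_cos_cos_orthogonal)
  have coeff_sq: "summable (\<lambda>j. (real j * \<xi> j)\<^sup>2)"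
    using \<xi> by (simp add: power_mult_distrib)
  obtain e C where e: "e \<longlonglongrightarrow> 0"
    "\<And>m N. m \<le> N \<Longrightarrow> (LINT z:Om|lborel. (dS {..<N} z - dS {..<m} z)\<^sup>2) \<le> e m"
    "\<And>N. (LINT z:Om|lborel. (dS {..<N} z)\<^sup>2) \<le> C"
    by (rule mode_sum_L2_Cauchy[OF coeff_sq]) (rule that[unfolded dS_def])
  have abs_summable: "summable (\<lambda>j. \<bar>\<xi> j\<bar>)"
    by (rule summable_abs_of_summable_weighted_square[OF \<xi>])
  show ?thesis
  proof (rule weak_derivative_power_of_limit[where T=test_per and dS="\<lambda>N. dS {..<N}"])
    fix N and \<phi> assume "\<phi> \<in> test_per"
    then have "smooth2 \<phi>" by (auto simp: test_per_def)
    then show "(LINT z:Om|lborel. (V_partial \<xi> N z)^n * dx \<phi> z)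
        = - (LINT z:Om|lborel. real n * (V_partial \<xi> N z)^(n-1) * dS {..<N} z * \<phi> z)"
      unfolding dS_def
      by (intro set_integral_Om_by_parts_dx has_real_derivative_power_mult
          V_partial_has_real_derivative_x continuous_intros f_cont g_cont)
         (use n in \<open>simp_all add: V_partial_boundary\<close>)
  qed (use e abs_summable V_partial_bound V_partial_tendsto smooth2_continuous smooth2_dx
       in \<open>auto simp: test_per_def dS_def intro!: continuous_intros f_cont g_cont\<close>)
qed

lemma V_power_orthogonal_V:
  assumes "summable (\<lambda>j. \<bar>\<xi> j\<bar>)" "summable (\<lambda>j. \<bar>\<zeta> j\<bar>)"
  shows "(LINT z:Om|lborel. (V_fun \<xi> z)^(2*p) * V_fun \<zeta> z) = 0"
proof (rule set_integral_Om_odd_reflection)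
  show "continuous_on UNIV (\<lambda>z. (V_fun \<xi> z)^(2*p) * V_fun \<zeta> z)"
    using assms by (intro continuous_intros continuous_on_V_fun)
  show "(V_fun \<xi> (t + pi, pi - x))^(2*p) * V_fun \<zeta> (t + pi, pi - x) = - ((V_fun \<xi> (t, x))^(2*p) * V_fun \<zeta> (t, x))"
    for t x
    by (simp add: V_fun_odd_reflection[OF assms(1)] V_fun_odd_reflection[OF assms(2)] power_mult)
qed

theorem lemma4p2:
  fixes p :: nat and v :: "real \<times> real \<Rightarrow> real"
  assumes "p \<ge> 2" and "v \<in> Vsp"
  shows "(\<lambda>z. (v z) ^ (2*p)) \<in> Wsp"
proof -
  obtain \<xi> where \<xi>: "summable (\<lambda>j. (real j)\<^sup>2 * (\<xi> j)\<^sup>2)" and v: "v = V_fun \<xi>"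
    using assms(2) by (auto simp: Vsp_eq)
  let ?u = "\<lambda>z. (V_fun \<xi> z) ^ (2*p)"
  have abs_summable: "summable (\<lambda>j. \<bar>\<xi> j\<bar>)"
    by (rule summable_abs_of_summable_weighted_square[OF \<xi>])
  have u_cont: "continuous_on UNIV ?u"
    by (intro continuous_intros continuous_on_V_fun abs_summable)
  have u_per: "t_periodic ?u"
    by (intro t_periodic_power t_periodic_V_fun abs_summable)
  obtain g1 where g1: "L2_Om g1" "\<forall>\<phi>\<in>test_per.
      (LINT z:Om|lborel. ?u z * dt \<phi> z) = - (LINT z:Om|lborel. g1 z * \<phi> z)"
    using V_power_weak_dt[OF \<xi>] by blast
  have "2*p \<ge> 1"
    using assms(1) by simp
  obtain g2 where g2: "L2_Om g2" "\<forall>\<phi>\<in>test_per.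
      (LINT z:Om|lborel. ?u z * dx \<phi> z) = - (LINT z:Om|lborel. g2 z * \<phi> z)"
    using V_power_weak_dx[OF \<xi> \<open>2*p \<ge> 1\<close>] by blast
  have "?u \<in> Xsp"
    unfolding Xsp_def H1_Om_def zero_trace_def
    using L2_Om_continuous[OF u_cont] Linf_Om_continuous[OF u_cont] u_per g1 g2 V_fun_even
    by (auto simp: test_c_def)
  moreover have "\<forall>w\<in>Vsp. (LINT z:Om|lborel. ?u z * w z) = 0"
    by (auto simp: Vsp_eq intro!: V_power_orthogonal_V abs_summable summable_abs_of_summable_weighted_square)
  ultimately show ?thesis
    unfolding v Wsp_def by blast
qed

end
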